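(* Let $n\ge 2$, let $w_0$ be the permutation with $w_0e_k=e_{n-k+1}$ for $k=1,\dots,n$, and for $a\neq b$ let $s_{ab}$ denote the transposition exchanging $a$ and $b$. For each pair $i\neq j$ in $\{1,\dots,n\}$, let $H_{ij}=\operatorname{span}\{E_{kl}: k\le i,\ l\ge j\}$. Then $X_{H_{ij}}=Y_w$ where $w=w_0s_{12}s_{23}\cdots s_{j-1,j}\,s_{n,n-1}\cdots s_{i+1,i}$ if $j<i$, and $w=w_0s_{12}s_{23}\cdots s_{j-2,j-1}\,s_{n,n-1}\cdots s_{i+1,i}$ if $j>i$ (products of permutation matrices).
   Context: $B$ is the group of invertible upper-triangular $n\times n$ complex matrices; $[g]\in GL_n(\mathbb{C})/B$ denotes the flag whose $k$-dimensional subspace is spanned by the first $k$ columns of $g$. $E_{kl}$ is the matrix unit with $1$ in entry $(k,l)$; $e_1,\dots,e_n$ is the standard basis. Permutations are identified with permutation matrices via $we_k=e_{w(k)}$. $X_{H}=\{[g]: g^{-1}E_{1n}g\in H\}$. The Schubert variety $Y_w$ is the closure of $\{[bw]: b\in B\}$. *)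

theory Defs
  imports "HOL-Analysis.Analysis" "HOL-Combinatorics.Transposition"
begin

text \<open>n x n complex matrices are represented as functions nat => nat => complex,
indices 1..n, zero outside {1..n} x {1..n}. The topology is the product topology
(on the supported matrices this is the Euclidean topology of C^(n^2)).\<close>

type_synonym cmat = "nat \<Rightarrow> nat \<Rightarrow> complex"

definition mats :: "nat \<Rightarrow> cmat set" where
  "mats n = {A. \<forall>i j. (i \<notin> {1..n} \<or> j \<notin> {1..n}) \<longrightarrow> A i j = 0}"

definition mmult :: "nat \<Rightarrow> cmat \<Rightarrow> cmat \<Rightarrow> cmat" where
  "mmult n A B = (\<lambda>i j. \<Sum>k=1..n. A i k * B k j)"

definition idm :: "nat \<Rightarrow> cmat" where
  "idm n = (\<lambda>i j. if i = j \<and> i \<in> {1..n} then 1 else 0)"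

definition mprod :: "nat \<Rightarrow> cmat list \<Rightarrow> cmat" where
  "mprod n Ms = foldr (mmult n) Ms (idm n)"

definition GL :: "nat \<Rightarrow> cmat set" where
  "GL n = {g \<in> mats n. \<exists>h \<in> mats n. mmult n g h = idm n \<and> mmult n h g = idm n}"

definition minv :: "nat \<Rightarrow> cmat \<Rightarrow> cmat" where
  "minv n g = (SOME h. h \<in> mats n \<and> mmult n g h = idm n \<and> mmult n h g = idm n)"

definition Bor :: "nat \<Rightarrow> cmat set" where
  "Bor n = {b \<in> GL n. \<forall>i j. j < i \<longrightarrow> b i j = 0}"

definition Eunit :: "nat \<Rightarrow> nat \<Rightarrow> cmat" where
  "Eunit k l = (\<lambda>i j. if i = k \<and> j = l then 1 else 0)"

definition pmat :: "nat \<Rightarrow> (nat \<Rightarrow> nat) \<Rightarrow> cmat" where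
  "pmat n w = (\<lambda>i j. if j \<in> {1..n} \<and> i = w j then 1 else 0)"

definition w0 :: "nat \<Rightarrow> nat \<Rightarrow> nat" where
  "w0 n = (\<lambda>k. if k \<in> {1..n} then n + 1 - k else k)"

text \<open>The flag [g] as the coset gB in GL_n / B.\<close>
definition flagof :: "nat \<Rightarrow> cmat \<Rightarrow> cmat set" where
  "flagof n g = {mmult n g b | b. b \<in> Bor n}"

definition Flags :: "nat \<Rightarrow> cmat set set" where
  "Flags n = flagof n ` GL n"

text \<open>Closed sets of the flag variety for the quotient topology GL_n -> GL_n/B.\<close>
definition flag_closed :: "nat \<Rightarrow> cmat set set \<Rightarrow> bool" where
  "flag_closed n C \<longleftrightarrow> C \<subseteq> Flags n \<and>
     closedin (top_of_set (GL n)) {g \<in> GL n. flagof n g \<in> C}"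

definition flag_closure :: "nat \<Rightarrow> cmat set set \<Rightarrow> cmat set set" where
  "flag_closure n S = \<Inter>{C. flag_closed n C \<and> S \<subseteq> C}"

definition XH :: "nat \<Rightarrow> cmat set \<Rightarrow> cmat set set" where
  "XH n H = {flagof n g | g. g \<in> GL n \<and> mmult n (mmult n (minv n g) (Eunit 1 n)) g \<in> H}"

definition Schubert :: "nat \<Rightarrow> cmat \<Rightarrow> cmat set set" where
  "Schubert n W = flag_closure n {flagof n (mmult n b W) | b. b \<in> Bor n}"

definition Hsp :: "nat \<Rightarrow> nat \<Rightarrow> nat \<Rightarrow> cmat set" where
  "Hsp n i j = {(\<lambda>a b. \<Sum>p\<in>{(k,l). k \<in> {1..n} \<and> l \<in> {1..n} \<and> k \<le> i \<and> j \<le> l}.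
                   c p * Eunit (fst p) (snd p) a b) | c. True}"

end

theory Submission
  imports Defs "Jordan_Normal_Form.Determinant" "HOL-Complex_Analysis.Complex_Analysis"
begin

text \<open>
  Since \<open>g\<^sup>-\<^sup>1 E\<^sub>1\<^sub>n g = (g\<^sup>-\<^sup>1 e\<^sub>1) (e\<^sub>n\<^sup>T g)\<close>, a flag \<open>[g]\<close> lies in \<open>X\<^sub>H\<^sub>i\<^sub>j\<close> iff
  \<open>e\<^sub>1 \<in> F\<^sub>i\<close> and \<open>F\<^sub>j\<^sub>-\<^sub>1 \<subseteq> {x\<^sub>n = 0}\<close>. These are closed conditions (Cramer's rule), and they hold on
  the cell \<open>B W B/B\<close> of the permutation \<open>w = w\<^sub>0 v\<close>, where \<open>v\<close> sends \<open>j\<close> to \<open>1\<close>, \<open>i\<close> to \<open>n\<close> and keeps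
  the order of the other indices; so \<open>Y\<^sub>w \<subseteq> X\<^sub>H\<close>.

  Conversely, let \<open>[g] \<in> X\<^sub>H\<close>. A perturbation by transvections inside \<open>X\<^sub>H\<close>, followed by a right
  multiplication in \<open>B\<close>, reduces to the case that the \<open>i\<close>-th column of \<open>g\<close> is \<open>e\<^sub>1\<close>. On the affine
  line from such a \<open>g\<close> to \<open>W\<close> these conditions persist, and the points \<open>h\<close> with \<open>h c = b W\<close>
  (\<open>b, c \<in> B\<close>) include those where finitely many minors do not vanish. The minors are polynomial
  in the parameter and nonzero at \<open>W\<close>, so \<open>g\<close> is a limit of points of \<open>B W\<close>, and \<open>X\<^sub>H \<subseteq> Y\<^sub>w\<close>.
\<close>

definition mvec :: "nat \<Rightarrow> cmat \<Rightarrow> (nat \<Rightarrow> complex) \<Rightarrow> nat \<Rightarrow> complex" where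
  "mvec n g x = (\<lambda>a. \<Sum>b=1..n. g a b * x b)"

definition evec :: "nat \<Rightarrow> nat \<Rightarrow> complex" where
  "evec k = (\<lambda>a. if a = k then 1 else 0)"

definition supported_upto :: "(nat \<Rightarrow> complex) \<Rightarrow> nat \<Rightarrow> bool" where
  "supported_upto x m \<longleftrightarrow> (\<forall>a. x a \<noteq> 0 \<longrightarrow> a \<in> {1..m})"

definition upper_tri :: "cmat \<Rightarrow> bool" where
  "upper_tri b \<longleftrightarrow> (\<forall>r c. c < r \<longrightarrow> b r c = 0)"

text \<open>Transfer to the matrices of \<open>Jordan_Normal_Form\<close>, indexed from \<open>0\<close>.\<close>

definition to_mat :: "nat \<Rightarrow> cmat \<Rightarrow> complex Matrix.mat" where
  "to_mat n g = Matrix.mat n n (\<lambda>(a,b). g (Suc a) (Suc b))"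

definition of_mat :: "nat \<Rightarrow> complex Matrix.mat \<Rightarrow> cmat" where
  "of_mat n B = (\<lambda>a b. if a \<in> {1..n} \<and> b \<in> {1..n} then B $$ (a - 1, b - 1) else 0)"

abbreviation mdet :: "nat \<Rightarrow> cmat \<Rightarrow> complex" where
  "mdet n g \<equiv> Determinant.det (to_mat n g)"

lemma sum_atLeast1_atMost_shift: "(\<Sum>k=Suc 0..n. f k) = (\<Sum>k<n. f (Suc k))"
  by (induction n) (auto simp: atLeastAtMostSuc_conv add.commute)

lemma sum_atLeast1_atMost_delta:
  "(\<Sum>k=1..(n::nat). if k = a then f k else 0) = (if a \<in> {1..n} then f a else 0)"
  by (simp add: sum.delta)

lemma matsD: "g \<in> mats n \<Longrightarrow> a \<notin> {1..n} \<or> b \<notin> {1..n} \<Longrightarrow> g a b = 0"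
  unfolding mats_def by auto

lemma matsI: "(\<And>a b. a \<notin> {1..n} \<or> b \<notin> {1..n} \<Longrightarrow> g a b = 0) \<Longrightarrow> g \<in> mats n"
  unfolding mats_def by auto

lemma mats_eqI:
  assumes "g \<in> mats n" "h \<in> mats n" "\<And>a b. a \<in> {1..n} \<Longrightarrow> b \<in> {1..n} \<Longrightarrow> g a b = h a b"
  shows "g = h"
proof (intro ext)
  fix a b
  show "g a b = h a b"
    using assms matsD[OF assms(1), of a b] matsD[OF assms(2), of a b] by (cases "a \<in> {1..n} \<and> b \<in> {1..n}") auto
qed

lemma mmult_mats: "g \<in> mats n \<Longrightarrow> h \<in> mats n \<Longrightarrow> mmult n g h \<in> mats n"
  unfolding mats_def mmult_def by auto

lemma idm_mats: "idm n \<in> mats n"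
  unfolding mats_def idm_def by auto

lemma mmult_assoc: "mmult n (mmult n a b) c = mmult n a (mmult n b c)"
proof (intro ext)
  fix x y
  have "mmult n (mmult n a b) c x y = (\<Sum>l=1..n. \<Sum>k=1..n. a x k * b k l * c l y)"
    unfolding mmult_def by (simp add: sum_distrib_right)
  also have "\<dots> = (\<Sum>k=1..n. \<Sum>l=1..n. a x k * b k l * c l y)"
    by (rule sum.swap)
  also have "\<dots> = mmult n a (mmult n b c) x y"
    unfolding mmult_def by (simp add: sum_distrib_left mult.assoc)
  finally show "mmult n (mmult n a b) c x y = mmult n a (mmult n b c) x y" .
qed

lemma mmult_idm_right: "g \<in> mats n \<Longrightarrow> mmult n g (idm n) = g"
proof (intro ext)
  fix a b assume g: "g \<in> mats n"
  have "mmult n g (idm n) a b = (\<Sum>k=1..n. if k = b then g a k else 0)"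
    unfolding mmult_def idm_def by (intro sum.cong) auto
  also have "\<dots> = g a b" using g by (simp add: sum_atLeast1_atMost_delta matsD)
  finally show "mmult n g (idm n) a b = g a b" .
qed

lemma mmult_idm_left: "g \<in> mats n \<Longrightarrow> mmult n (idm n) g = g"
proof (intro ext)
  fix a b assume g: "g \<in> mats n"
  have "mmult n (idm n) g a b = (\<Sum>k=1..n. if k = a then g k b else 0)"
    unfolding mmult_def idm_def by (intro sum.cong) auto
  also have "\<dots> = g a b" using g by (simp add: sum_atLeast1_atMost_delta matsD)
  finally show "mmult n (idm n) g a b = g a b" .
qed

lemma mvec_mmult: "mvec n (mmult n g h) x = mvec n g (mvec n h x)"
proof (intro ext)
  fix y
  have "mvec n (mmult n g h) x y = (\<Sum>l=1..n. \<Sum>k=1..n. g y k * h k l * x l)"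
    unfolding mmult_def mvec_def by (simp add: sum_distrib_right)
  also have "\<dots> = (\<Sum>k=1..n. \<Sum>l=1..n. g y k * h k l * x l)"
    by (rule sum.swap)
  also have "\<dots> = mvec n g (mvec n h x) y"
    unfolding mvec_def by (simp add: sum_distrib_left mult.assoc)
  finally show "mvec n (mmult n g h) x y = mvec n g (mvec n h x) y" .
qed

lemma mvec_idm: "mvec n (idm n) x = (\<lambda>a. if a \<in> {1..n} then x a else 0)"
proof (intro ext)
  fix a
  have "mvec n (idm n) x a = (\<Sum>k=1..n. if k = a then x k else 0)"
    unfolding mvec_def idm_def by (intro sum.cong) auto
  then show "mvec n (idm n) x a = (if a \<in> {1..n} then x a else 0)"
    by (simp add: sum_atLeast1_atMost_delta)
qed

lemma mvec_idm_evec: "k \<in> {1..n} \<Longrightarrow> mvec n (idm n) (evec k) = evec k"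
  by (auto simp: mvec_idm evec_def)

lemma mvec_evec: "k \<in> {1..n} \<Longrightarrow> mvec n g (evec k) = (\<lambda>a. g a k)"
proof (intro ext)
  fix a assume k: "k \<in> {1..n}"
  have "mvec n g (evec k) a = (\<Sum>b=1..n. if b = k then g a b else 0)"
    unfolding mvec_def evec_def by (intro sum.cong) auto
  then show "mvec n g (evec k) a = g a k" using k by (simp add: sum_atLeast1_atMost_delta)
qed

lemma mvec_mats_outside: "g \<in> mats n \<Longrightarrow> a \<notin> {1..n} \<Longrightarrow> mvec n g x a = 0"
  unfolding mvec_def by (simp add: matsD)

lemma mvec_nonzero_support:
  assumes "mvec n g u = evec 1" shows "\<exists>a\<in>{1..n}. u a \<noteq> 0"
proof (rule ccontr)
  assume "\<not> ?thesis"
  then have "mvec n g u 1 = 0" unfolding mvec_def by auto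
  then show False using assms by (simp add: evec_def)
qed

lemma to_mat_carrier: "to_mat n g \<in> carrier_mat n n"
  unfolding to_mat_def by simp

lemma to_mat_index: "a < n \<Longrightarrow> b < n \<Longrightarrow> to_mat n g $$ (a,b) = g (Suc a) (Suc b)"
  unfolding to_mat_def by simp

lemma to_mat_mmult: "to_mat n (mmult n g h) = to_mat n g * to_mat n h"
  by (rule eq_matI)
    (auto simp: to_mat_def mmult_def scalar_prod_def sum_atLeast1_atMost_shift lessThan_atLeast0)

lemma to_mat_idm: "to_mat n (idm n) = 1\<^sub>m n"
  by (rule eq_matI) (auto simp: to_mat_def idm_def)

lemma to_mat_of_mat: "B \<in> carrier_mat n n \<Longrightarrow> to_mat n (of_mat n B) = B"
  by (rule eq_matI) (auto simp: to_mat_def of_mat_def)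

lemma of_mat_mats: "of_mat n B \<in> mats n"
  unfolding of_mat_def mats_def by auto

lemma to_mat_inj: "g \<in> mats n \<Longrightarrow> h \<in> mats n \<Longrightarrow> to_mat n g = to_mat n h \<Longrightarrow> g = h"
proof (rule mats_eqI)
  fix a b assume e: "to_mat n g = to_mat n h" and "a \<in> {1..n}" "b \<in> {1..n}"
  then obtain a' b' where ab: "a = Suc a'" "b = Suc b'" "a' < n" "b' < n"
    by (cases a; cases b) auto
  have "to_mat n g $$ (a', b') = to_mat n h $$ (a', b')" using e by simp
  then show "g a b = h a b" using ab by (simp add: to_mat_index)
qed

lemma mdet_mmult: "mdet n (mmult n g h) = mdet n g * mdet n h"
  by (simp add: to_mat_mmult det_mult[OF to_mat_carrier to_mat_carrier])

lemma mdet_expand: "mdet n X =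
  (\<Sum>p\<in>{p. p permutes {0..<n}}. signof p * (\<Prod>r\<in>{0..<n}. X (Suc r) (Suc (p r))))"
  unfolding det_def'[OF to_mat_carrier]
proof (intro sum.cong refl arg_cong2[where f = "(*)"] prod.cong)
  fix p r assume "p \<in> {p. p permutes {0..<n}}" "r \<in> {0..<n}"
  then have "p r < n" using permutes_in_image by fastforce
  then show "to_mat n X $$ (r, p r) = X (Suc r) (Suc (p r))" using \<open>r \<in> {0..<n}\<close> by (simp add: to_mat_index)
qed

lemma continuous_on_mdet:
  fixes F :: "'a::topological_space \<Rightarrow> cmat"
  assumes "\<And>r c. continuous_on S (\<lambda>x. F x r c)"
  shows "continuous_on S (\<lambda>x. mdet n (F x))"
  unfolding mdet_expand by (intro continuous_intros assms)

lemma holomorphic_on_mdet: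
  fixes F :: "complex \<Rightarrow> cmat"
  assumes "\<And>r c. (\<lambda>t. F t r c) holomorphic_on S"
  shows "(\<lambda>t. mdet n (F t)) holomorphic_on S"
  unfolding mdet_expand by (intro holomorphic_intros assms)

lemma continuous_on_entry: "continuous_on UNIV (\<lambda>g::cmat. g r c)"
  using continuous_on_product_then_coordinatewise[OF continuous_on_product_coordinates[of r]] .

definition replace_column :: "nat \<Rightarrow> (nat \<Rightarrow> complex) \<Rightarrow> cmat \<Rightarrow> cmat" where
  "replace_column a y g = (\<lambda>r c. if c = a then y r else g r c)"

lemma to_mat_mvec:
  "to_mat n g *\<^sub>v Matrix.vec n (\<lambda>r. u (Suc r)) = Matrix.vec n (\<lambda>r. mvec n g u (Suc r))"
  by (rule eq_vecI)
    (auto simp: to_mat_def mvec_def scalar_prod_def Matrix.row_def sum_atLeast1_atMost_shift lessThan_atLeast0)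

lemma cramer_mdet:
  assumes "mvec n g u = y" "a \<in> {1..n}"
  shows "mdet n (replace_column a y g) = u a * mdet n g"
proof -
  let ?x = "Matrix.vec n (\<lambda>r. u (Suc r))"
  have "to_mat n (replace_column a y g) = replace_col (to_mat n g) (to_mat n g *\<^sub>v ?x) (a - 1)"
    unfolding to_mat_mvec assms(1)
    by (rule eq_matI) (use assms(2) in \<open>auto simp: to_mat_def replace_col_def replace_column_def\<close>)
  also have "Determinant.det \<dots> = ?x $ (a - 1) * mdet n g"
    by (rule cramer_lemma_mat[OF to_mat_carrier]) (use assms(2) in auto)
  moreover have "?x $ (a - 1) = u a" using assms(2) by (cases a) auto
  ultimately show ?thesis by simp
qed

lemma GL_mats: "g \<in> GL n \<Longrightarrow> g \<in> mats n"
  unfolding GL_def by auto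

lemma GL_iff_mdet: "g \<in> GL n \<longleftrightarrow> g \<in> mats n \<and> mdet n g \<noteq> 0"
proof
  assume "g \<in> GL n"
  then obtain h where g: "g \<in> mats n" and "mmult n g h = idm n"
    unfolding GL_def by auto
  then have "mdet n g * mdet n h = 1"
    by (metis mdet_mmult to_mat_idm det_one)
  then show "g \<in> mats n \<and> mdet n g \<noteq> 0" using g by auto
next
  assume a: "g \<in> mats n \<and> mdet n g \<noteq> 0"
  from det_non_zero_imp_unit[OF to_mat_carrier, of n g, OF a[THEN conjunct2], of "()"]
  obtain B where B: "B \<in> carrier_mat n n" "B * to_mat n g = 1\<^sub>m n" "to_mat n g * B = 1\<^sub>m n"
    unfolding Units_def ring_mat_def by auto
  have "mmult n g (of_mat n B) = idm n" "mmult n (of_mat n B) g = idm n"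
    by (rule to_mat_inj[where n=n];
        use a B in \<open>simp add: to_mat_mmult to_mat_of_mat to_mat_idm mmult_mats of_mat_mats idm_mats\<close>)+
  then show "g \<in> GL n" using a of_mat_mats unfolding GL_def by blast
qed

lemma GL_if_mmult_eq_idm:
  assumes "g \<in> mats n" "h \<in> mats n" "mmult n g h = idm n"
  shows "g \<in> GL n" "h \<in> GL n"
proof -
  have "mdet n g * mdet n h = 1"
    by (metis assms(3) mdet_mmult to_mat_idm det_one)
  then show "g \<in> GL n" "h \<in> GL n" using assms by (auto simp: GL_iff_mdet)
qed

lemma GL_mmult: "g \<in> GL n \<Longrightarrow> h \<in> GL n \<Longrightarrow> mmult n g h \<in> GL n"
  by (auto simp: GL_iff_mdet mmult_mats mdet_mmult)

lemma idm_GL: "idm n \<in> GL n"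
  using GL_if_mmult_eq_idm[OF idm_mats idm_mats mmult_idm_left[OF idm_mats]] by blast

lemma
  assumes "g \<in> GL n"
  shows minv_mats: "minv n g \<in> mats n"
    and mmult_minv: "mmult n g (minv n g) = idm n"
    and minv_mmult: "mmult n (minv n g) g = idm n"
proof -
  have "\<exists>h. h \<in> mats n \<and> mmult n g h = idm n \<and> mmult n h g = idm n"
    using assms unfolding GL_def by auto
  from someI_ex[OF this]
  show "minv n g \<in> mats n" "mmult n g (minv n g) = idm n" "mmult n (minv n g) g = idm n"
    unfolding minv_def by auto
qed

lemma minv_GL: "g \<in> GL n \<Longrightarrow> minv n g \<in> GL n"
  using GL_if_mmult_eq_idm(1)[OF minv_mats GL_mats minv_mmult] .

lemma GL_mvec_eqD:
  assumes "g \<in> GL n" "mvec n g x = mvec n g x'" "a \<in> {1..n}"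
  shows "x a = x' a"
proof -
  have "mvec n (mmult n (minv n g) g) x = mvec n (mmult n (minv n g) g) x'"
    using assms(2) by (simp add: mvec_mmult)
  then have "mvec n (idm n) x a = mvec n (idm n) x' a" using minv_mmult[OF assms(1)] by simp
  then show ?thesis using assms(3) by (simp add: mvec_idm)
qed

lemma GL_last_row_nonzero:
  assumes "g \<in> GL n" "1 \<le> n"
  shows "\<exists>b\<in>{1..n}. g n b \<noteq> 0"
proof (rule ccontr)
  assume "\<not> ?thesis"
  then have "mmult n g (minv n g) n n = 0" unfolding mmult_def by auto
  then show False using mmult_minv[OF assms(1)] assms(2) by (simp add: idm_def)
qed

lemma mvec_minv_first_column:
  assumes "g \<in> GL n" "1 \<le> n"
  shows "mvec n g (\<lambda>a. minv n g a 1) = evec 1"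
proof -
  have "mvec n g (\<lambda>a. minv n g a 1) = mvec n (mmult n g (minv n g)) (evec 1)"
    using assms by (simp add: mvec_evec mvec_mmult)
  then show ?thesis using assms by (simp add: mmult_minv mvec_idm_evec)
qed

subsection \<open>Upper triangular matrices and the Borel subgroup\<close>

lemma mdet_upper_tri:
  assumes "upper_tri b"
  shows "mdet n b = (\<Prod>k=1..n. b k k)"
proof -
  have "upper_triangular (to_mat n b)"
    using assms unfolding upper_triangular_def upper_tri_def by (auto simp: to_mat_def)
  then have "mdet n b = prod_list (diag_mat (to_mat n b))"
    using det_upper_triangular to_mat_carrier by blast
  also have "\<dots> = (\<Prod>i = 0..<n. b (Suc i) (Suc i))"
    by (simp add: prod_list_diag_prod to_mat_index to_mat_def)
  also have "\<dots> = (\<Prod>k=1..n. b k k)"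
    by (induction n) (auto simp: atLeastAtMostSuc_conv)
  finally show ?thesis .
qed

lemma upper_tri_GL_diag_nonzero:
  assumes "b \<in> GL n" "upper_tri b" "k \<in> {1..n}"
  shows "b k k \<noteq> 0"
  using assms mdet_upper_tri[of b n] by (auto simp: GL_iff_mdet)

lemma upper_tri_mmult: "upper_tri b \<Longrightarrow> upper_tri c \<Longrightarrow> upper_tri (mmult n b c)"
  unfolding upper_tri_def mmult_def
proof (intro allI impI)
  fix r s :: nat
  assume b: "\<forall>r c. c < r \<longrightarrow> b r c = 0" and c: "\<forall>r ca. ca < r \<longrightarrow> c r ca = 0" and "s < r"
  then have "b r k * c k s = 0" for k by (cases "k < r") auto
  then show "(\<Sum>k = 1..n. b r k * c k s) = 0" by (intro sum.neutral) auto
qed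

lemma upper_tri_solve:
  assumes b: "b \<in> mats n" "upper_tri b" "\<forall>k\<in>{1..n}. b k k \<noteq> 0"
    and "m \<le> n" "supported_upto y m"
  shows "\<exists>x. supported_upto x m \<and> mvec n b x = y"
  using assms(4,5)
proof (induction m arbitrary: y)
  case 0
  then have "y = (\<lambda>_. 0)" by (auto simp: supported_upto_def)
  then show ?case by (intro exI[of _ "\<lambda>_. 0"]) (simp add: mvec_def supported_upto_def)
next
  case (Suc m)
  define c where "c = y (Suc m) / b (Suc m) (Suc m)"
  define y' where "y' = (\<lambda>a. y a - c * b a (Suc m))"
  have "b (Suc m) (Suc m) \<noteq> 0" using b(3) Suc.prems(1) by auto
  then have "y' a = 0" if "a \<notin> {1..m}" for a
    using that Suc.prems(2) b(1,2) matsD[OF b(1), of a "Suc m"]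
    unfolding supported_upto_def upper_tri_def y'_def c_def
    by (cases "a = Suc m") (auto simp: not_less_eq_eq)
  then obtain x' where x': "supported_upto x' m" "mvec n b x' = y'"
    using Suc.IH[of y'] Suc.prems(1) unfolding supported_upto_def by auto
  define x where "x = (\<lambda>a. x' a + c * evec (Suc m) a)"
  have "mvec n b x = (\<lambda>a. mvec n b x' a + c * mvec n b (evec (Suc m)) a)"
    unfolding x_def mvec_def by (auto simp: sum.distrib sum_distrib_left algebra_simps)
  then have "mvec n b x = y"
    using Suc.prems(1) by (simp add: x' mvec_evec y'_def)
  moreover have "supported_upto x (Suc m)"
    using x'(1) by (auto simp: x_def evec_def supported_upto_def)
  ultimately show ?case by blast
qed

lemma Bor_GL: "b \<in> Bor n \<Longrightarrow> b \<in> GL n"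
  unfolding Bor_def by auto

lemma Bor_upper_tri: "b \<in> Bor n \<Longrightarrow> upper_tri b"
  unfolding Bor_def upper_tri_def by auto

lemma BorI: "b \<in> GL n \<Longrightarrow> upper_tri b \<Longrightarrow> b \<in> Bor n"
  unfolding Bor_def upper_tri_def by auto

lemma Bor_solve:
  assumes "c \<in> Bor n" "m \<le> n" "supported_upto y m"
  shows "\<exists>x. supported_upto x m \<and> mvec n c x = y"
  using upper_tri_solve[OF GL_mats[OF Bor_GL] Bor_upper_tri _ assms(2,3)]
    upper_tri_GL_diag_nonzero[OF Bor_GL Bor_upper_tri] assms(1) by blast

lemma Bor_mmult: "b \<in> Bor n \<Longrightarrow> c \<in> Bor n \<Longrightarrow> mmult n b c \<in> Bor n"
  by (intro BorI GL_mmult upper_tri_mmult) (auto simp: Bor_GL Bor_upper_tri)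

lemma idm_Bor: "idm n \<in> Bor n"
  by (intro BorI idm_GL) (auto simp: upper_tri_def idm_def)

lemma Bor_minv: assumes "b \<in> Bor n" shows "minv n b \<in> Bor n"
proof (rule BorI[OF minv_GL[OF Bor_GL[OF assms]]])
  have bG: "b \<in> GL n" using assms by (rule Bor_GL)
  show "upper_tri (minv n b)" unfolding upper_tri_def
  proof (intro allI impI)
    fix r s :: nat assume sr: "s < r"
    show "minv n b r s = 0"
    proof (cases "s \<in> {1..n} \<and> r \<in> {1..n}")
      case False
      then show ?thesis using minv_mats[OF bG] by (auto simp: matsD)
    next
      case True
      have "mvec n b (\<lambda>a. minv n b a s) = mvec n (mmult n b (minv n b)) (evec s)"
        using True by (simp add: mvec_mmult mvec_evec)
      then have "mvec n b (\<lambda>a. minv n b a s) = evec s"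
        using True mmult_minv[OF bG] by (simp add: mvec_idm_evec)
      moreover have "supported_upto (evec s) s" using True by (simp add: supported_upto_def evec_def)
      then obtain x where "supported_upto x s" "mvec n b x = evec s"
        using Bor_solve[OF assms] True by auto
      ultimately have "minv n b r s = x r" using GL_mvec_eqD[OF bG, of _ x r] True by simp
      then show ?thesis using \<open>supported_upto x s\<close> sr by (auto simp: supported_upto_def)
    qed
  qed
qed

lemma flagof_mmult_Bor:
  assumes "c \<in> Bor n" "g \<in> mats n"
  shows "flagof n (mmult n g c) = flagof n g"
proof
  show "flagof n (mmult n g c) \<subseteq> flagof n g"
    unfolding flagof_def using assms Bor_mmult by (auto simp: mmult_assoc)
next
  show "flagof n g \<subseteq> flagof n (mmult n g c)"
  proof
    fix x assume "x \<in> flagof n g"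
    then obtain b where b: "b \<in> Bor n" "x = mmult n g b" unfolding flagof_def by auto
    have "mmult n (mmult n g c) (mmult n (minv n c) b) = mmult n g (mmult n (mmult n c (minv n c)) b)"
      by (simp add: mmult_assoc)
    also have "\<dots> = x"
      using mmult_minv[OF Bor_GL[OF assms(1)]] b mmult_idm_left[OF GL_mats[OF Bor_GL[OF b(1)]]] by simp
    finally show "x \<in> flagof n (mmult n g c)"
      unfolding flagof_def using Bor_mmult[OF Bor_minv[OF assms(1)] b(1)] by auto
  qed
qed

lemma flagof_eqD:
  assumes "g \<in> mats n" "flagof n g = flagof n g'"
  shows "\<exists>b\<in>Bor n. g = mmult n g' b"
proof -
  have "g \<in> flagof n g"
    unfolding flagof_def using mmult_idm_right[OF assms(1)] idm_Bor by force
  then show ?thesis using assms(2) unfolding flagof_def by auto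
qed

subsection \<open>The variety \<open>X\<^sub>H\<close>\<close>

text \<open>\<open>XH_witness n i j g u\<close> says that \<open>[g] \<in> X\<^sub>H\<^sub>i\<^sub>j\<close>, witnessed by \<open>u = g\<^sup>-\<^sup>1 e\<^sub>1\<close>: the vector \<open>e\<^sub>1 = g u\<close>
  lies in the \<open>i\<close>-th subspace of the flag, and the \<open>(j - 1)\<close>-th subspace lies in the hyperplane
  \<open>x\<^sub>n = 0\<close>.\<close>

definition XH_witness :: "nat \<Rightarrow> nat \<Rightarrow> nat \<Rightarrow> cmat \<Rightarrow> (nat \<Rightarrow> complex) \<Rightarrow> bool" where
  "XH_witness n i j g u \<longleftrightarrow> g \<in> GL n \<and> (\<forall>b. 1 \<le> b \<and> b < j \<longrightarrow> g n b = 0) \<and>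
     supported_upto u i \<and> mvec n g u = evec 1"

lemma Hsp_iff_support:
  "M \<in> Hsp n i j \<longleftrightarrow> (\<forall>a b. M a b \<noteq> 0 \<longrightarrow> a \<in> {1..n} \<and> b \<in> {1..n} \<and> a \<le> i \<and> j \<le> b)"
    (is "_ \<longleftrightarrow> ?supp")
proof
  let ?P = "{(k,l). k \<in> {1..n} \<and> l \<in> {1..n} \<and> k \<le> i \<and> j \<le> l}"
  assume "M \<in> Hsp n i j"
  then obtain c where M: "M = (\<lambda>a b. \<Sum>p\<in>?P. c p * Eunit (fst p) (snd p) a b)"
    unfolding Hsp_def by auto
  show ?supp
  proof (intro allI impI)
    fix a b assume "M a b \<noteq> 0"
    then obtain p where "p \<in> ?P" "c p * Eunit (fst p) (snd p) a b \<noteq> 0"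
      unfolding M using sum.not_neutral_contains_not_neutral by blast
    then show "a \<in> {1..n} \<and> b \<in> {1..n} \<and> a \<le> i \<and> j \<le> b"
      by (auto simp: Eunit_def split: if_splits)
  qed
next
  let ?P = "{(k,l). k \<in> {1..n} \<and> l \<in> {1..n} \<and> k \<le> i \<and> j \<le> l}"
  assume H: ?supp
  have fin: "finite ?P"
    by (rule finite_subset[of _ "{1..n} \<times> {1..n}"]) auto
  have "M = (\<lambda>a b. \<Sum>p\<in>?P. M (fst p) (snd p) * Eunit (fst p) (snd p) a b)"
  proof (intro ext)
    fix a b
    have "(\<Sum>p\<in>?P. M (fst p) (snd p) * Eunit (fst p) (snd p) a b) = (\<Sum>p\<in>?P. if p = (a,b) then M a b else 0)"
      by (intro sum.cong) (auto simp: Eunit_def)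
    also have "\<dots> = M a b" using fin H by (auto simp: sum.delta')
    finally show "M a b = (\<Sum>p\<in>?P. M (fst p) (snd p) * Eunit (fst p) (snd p) a b)" by simp
  qed
  then show "M \<in> Hsp n i j"
    unfolding Hsp_def by (intro CollectI exI[of _ "\<lambda>p. M (fst p) (snd p)"]) simp
qed

lemma mmult_Eunit_1n:
  assumes "1 \<le> n"
  shows "mmult n (mmult n h (Eunit 1 n)) g = (\<lambda>a b. h a 1 * g n b)"
proof (intro ext)
  fix a b
  have hE: "mmult n h (Eunit 1 n) a c = (if c = n then h a 1 else 0)" for c
  proof -
    have "mmult n h (Eunit 1 n) a c = (\<Sum>k=1..n. if k = 1 then (if c = n then h a 1 else 0) else 0)"
      unfolding mmult_def Eunit_def by (intro sum.cong) auto
    then show ?thesis using assms by (simp add: sum_atLeast1_atMost_delta)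
  qed
  have "mmult n (mmult n h (Eunit 1 n)) g a b = (\<Sum>k=1..n. if k = n then h a 1 * g n b else 0)"
    unfolding mmult_def[of n "mmult n h (Eunit 1 n)"] hE by (intro sum.cong) auto
  then show "mmult n (mmult n h (Eunit 1 n)) g a b = h a 1 * g n b"
    using assms by (simp add: sum_atLeast1_atMost_delta)
qed

lemma conj_Eunit_in_Hsp_iff:
  assumes g: "g \<in> GL n" and n: "1 \<le> n" and i: "i \<le> n"
  shows "mmult n (mmult n (minv n g) (Eunit 1 n)) g \<in> Hsp n i j \<longleftrightarrow> (\<exists>u. XH_witness n i j g u)"
proof -
  define u where "u = (\<lambda>a. minv n g a 1)"
  have gu: "mvec n g u = evec 1" unfolding u_def using mvec_minv_first_column[OF g n] .
  have M: "mmult n (mmult n (minv n g) (Eunit 1 n)) g = (\<lambda>a b. u a * g n b)"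
    unfolding u_def using mmult_Eunit_1n[OF n] by simp
  obtain b0 where b0: "b0 \<in> {1..n}" "g n b0 \<noteq> 0" using GL_last_row_nonzero[OF g n] by auto
  obtain a0 where a0: "a0 \<in> {1..n}" "u a0 \<noteq> 0" using mvec_nonzero_support[OF gu] by auto
  have u_mats: "u a = 0" if "a \<notin> {1..n}" for a
    unfolding u_def using minv_mats[OF g] that by (simp add: matsD)
  have unique: "u a = u' a" if "mvec n g u' = evec 1" "a \<in> {1..n}" for u' a
    using GL_mvec_eqD[OF g, of u u' a] gu that by simp
  show ?thesis
  proof
    assume "mmult n (mmult n (minv n g) (Eunit 1 n)) g \<in> Hsp n i j"
    then have H: "u a * g n b \<noteq> 0 \<Longrightarrow> a \<in> {1..n} \<and> b \<in> {1..n} \<and> a \<le> i \<and> j \<le> b" for a b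
      unfolding M Hsp_iff_support by auto
    have "supported_upto u i"
      unfolding supported_upto_def using H[of _ b0] b0 by auto
    moreover have "\<forall>b. 1 \<le> b \<and> b < j \<longrightarrow> g n b = 0"
      using H[of a0] a0 by force
    ultimately show "\<exists>u. XH_witness n i j g u" unfolding XH_witness_def using g gu by blast
  next
    assume "\<exists>u. XH_witness n i j g u"
    then obtain u' where "supported_upto u' i" "mvec n g u' = evec 1"
      and row: "\<forall>b. 1 \<le> b \<and> b < j \<longrightarrow> g n b = 0" unfolding XH_witness_def by blast
    then have "supported_upto u i" using unique u_mats by (metis supported_upto_def)
    moreover have "b \<in> {1..n}" if "g n b \<noteq> 0" for b
      using that GL_mats[OF g] matsD by blast
    ultimately show "mmult n (mmult n (minv n g) (Eunit 1 n)) g \<in> Hsp n i j"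
      unfolding M Hsp_iff_support supported_upto_def using row i by (metis atLeastAtMost_iff
          mult_eq_0_iff not_le order_trans)
  qed
qed

lemma XH_witness_mmult_Bor:
  assumes "XH_witness n i j g u" "c \<in> Bor n" "i \<le> n"
  shows "\<exists>u'. XH_witness n i j (mmult n g c) u'"
proof -
  have g: "g \<in> GL n" and row: "\<forall>b. 1 \<le> b \<and> b < j \<longrightarrow> g n b = 0"
    and u: "supported_upto u i" "mvec n g u = evec 1"
    using assms(1) unfolding XH_witness_def by blast+
  have c: "c \<in> GL n" "upper_tri c" using assms(2) by (auto simp: Bor_GL Bor_upper_tri)
  obtain x where x: "supported_upto x i" "mvec n c x = u"
    using Bor_solve[OF assms(2,3) u(1)] by blast
  have "mvec n (mmult n g c) x = evec 1" by (simp add: mvec_mmult x u)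
  moreover have "mmult n g c n b = 0" if b: "1 \<le> b" "b < j" for b
  proof -
    have "g n k * c k b = 0" for k
      using row b c(2) matsD[OF GL_mats[OF g], of n 0]
      by (cases "b < k"; cases "k = 0") (auto simp: upper_tri_def)
    then show ?thesis unfolding mmult_def by (intro sum.neutral) auto
  qed
  ultimately show ?thesis unfolding XH_witness_def using GL_mmult[OF g c(1)] x(1) by blast
qed

lemma flagof_in_XH_iff:
  assumes g: "g \<in> GL n" and n: "1 \<le> n" and i: "i \<le> n"
  shows "flagof n g \<in> XH n (Hsp n i j) \<longleftrightarrow> (\<exists>u. XH_witness n i j g u)"
proof
  assume "\<exists>u. XH_witness n i j g u"
  then show "flagof n g \<in> XH n (Hsp n i j)"
    unfolding XH_def using conj_Eunit_in_Hsp_iff[OF g n i] g by blast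
next
  assume "flagof n g \<in> XH n (Hsp n i j)"
  then obtain g' where g': "flagof n g = flagof n g'" "g' \<in> GL n"
    "mmult n (mmult n (minv n g') (Eunit 1 n)) g' \<in> Hsp n i j"
    unfolding XH_def by auto
  obtain u where "XH_witness n i j g' u" using conj_Eunit_in_Hsp_iff[OF g'(2) n i] g'(3) by blast
  moreover obtain b where "b \<in> Bor n" "g = mmult n g' b"
    using flagof_eqD[OF GL_mats[OF g] g'(1)] by blast
  ultimately show "\<exists>u. XH_witness n i j g u" using XH_witness_mmult_Bor i by blast
qed

lemma GL_support_iff_mdet_replace_column:
  assumes g: "g \<in> GL n" and n: "1 \<le> n"
  shows "(\<exists>u. supported_upto u i \<and> mvec n g u = evec 1) \<longleftrightarrow>
         (\<forall>a\<in>{i<..n}. mdet n (replace_column a (evec 1) g) = 0)"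
proof
  assume "\<exists>u. supported_upto u i \<and> mvec n g u = evec 1"
  then obtain u where u: "supported_upto u i" "mvec n g u = evec 1" by blast
  show "\<forall>a\<in>{i<..n}. mdet n (replace_column a (evec 1) g) = 0"
  proof
    fix a assume a: "a \<in> {i<..n}"
    then have "u a = 0" using u(1) by (force simp: supported_upto_def)
    then show "mdet n (replace_column a (evec 1) g) = 0" using a cramer_mdet[OF u(2)] by simp
  qed
next
  assume D: "\<forall>a\<in>{i<..n}. mdet n (replace_column a (evec 1) g) = 0"
  define u where "u = (\<lambda>a. minv n g a 1)"
  have gu: "mvec n g u = evec 1" unfolding u_def using mvec_minv_first_column[OF g n] .
  have "mdet n g \<noteq> 0" using g by (simp add: GL_iff_mdet)
  moreover have "u a * mdet n g = 0" if "a \<in> {i<..n}" for a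
    using D cramer_mdet[OF gu, of a] that by simp
  moreover have "u a = 0" if "a \<notin> {1..n}" for a
    unfolding u_def using minv_mats[OF g] matsD that by blast
  ultimately have "supported_upto u i"
    unfolding supported_upto_def by (metis atLeastAtMost_iff greaterThanAtMost_iff mult_eq_0_iff not_le)
  then show "\<exists>u. supported_upto u i \<and> mvec n g u = evec 1" using gu by blast
qed

lemma closedin_XH_witness:
  assumes n: "1 \<le> n"
  shows "closedin (top_of_set (GL n)) {g \<in> GL n. \<exists>u. XH_witness n i j g u}"
proof -
  define T where "T = (\<Inter>b\<in>{1..<j}. {g::cmat. g n b = 0}) \<inter>
    (\<Inter>a\<in>{i<..n}. {g. mdet n (replace_column a (evec 1) g) = 0})"
  have "closed T" unfolding T_def
  proof (intro closed_Int closed_INT ballI)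
    fix b show "closed {g::cmat. g n b = 0}"
      using closed_Collect_eq[OF continuous_on_entry continuous_on_const] by blast
  next
    fix a
    have "continuous_on UNIV (\<lambda>g. mdet n (replace_column a (evec 1) g))"
    proof (intro continuous_on_mdet)
      fix r c show "continuous_on UNIV (\<lambda>g. replace_column a (evec 1) g r c)"
        by (cases "c = a") (simp_all add: replace_column_def continuous_on_entry)
    qed
    then show "closed {g. mdet n (replace_column a (evec 1) g) = 0}"
      using closed_Collect_eq[OF _ continuous_on_const] by blast
  qed
  moreover have "{g \<in> GL n. \<exists>u. XH_witness n i j g u} = GL n \<inter> T"
    unfolding T_def XH_witness_def using GL_support_iff_mdet_replace_column[OF _ n] by auto
  ultimately show ?thesis using closedin_closed_Int by metis
qed

lemma flag_closed_XH:
  assumes "1 \<le> n" "i \<le> n"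
  shows "flag_closed n (XH n (Hsp n i j))"
  unfolding flag_closed_def
proof
  show "XH n (Hsp n i j) \<subseteq> Flags n" unfolding XH_def Flags_def by blast
  have "{g \<in> GL n. flagof n g \<in> XH n (Hsp n i j)} = {g \<in> GL n. \<exists>u. XH_witness n i j g u}"
    using flagof_in_XH_iff[OF _ assms] by blast
  then show "closedin (top_of_set (GL n)) {g \<in> GL n. flagof n g \<in> XH n (Hsp n i j)}"
    using closedin_XH_witness[OF assms(1)] by simp
qed

subsection \<open>Permutation matrices\<close>

lemma pmat_mats:
  assumes "\<forall>k\<in>{1..n}. f k \<in> {1..n}"
  shows "pmat n f \<in> mats n"
  using assms by (intro matsI) (auto simp: pmat_def)

lemma pmat_mmult:
  assumes "\<forall>k\<in>{1..n}. g k \<in> {1..n}"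
  shows "mmult n (pmat n f) (pmat n g) = pmat n (f \<circ> g)"
proof (intro ext)
  fix a c
  have "mmult n (pmat n f) (pmat n g) a c =
        (\<Sum>k=1..n. if k = g c then (if c \<in> {1..n} \<and> a = f k then 1 else 0) else 0)"
    unfolding mmult_def pmat_def by (intro sum.cong) auto
  also have "\<dots> = pmat n (f \<circ> g) a c"
    using assms by (auto simp: sum_atLeast1_atMost_delta pmat_def)
  finally show "mmult n (pmat n f) (pmat n g) a c = pmat n (f \<circ> g) a c" .
qed

lemma mmult_pmat:
  assumes "\<forall>k\<in>{1..n}. f k \<in> {1..n}"
  shows "mmult n b (pmat n f) q c = (if c \<in> {1..n} then b q (f c) else 0)"
proof -
  have "mmult n b (pmat n f) q c = (\<Sum>r=1..n. if r = f c then (if c \<in> {1..n} then b q r else 0) else 0)"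
    unfolding mmult_def pmat_def by (intro sum.cong) auto
  then show ?thesis
    using assms by (auto simp: sum_atLeast1_atMost_delta)
qed

lemma idm_eq_pmat_id: "idm n = pmat n id"
  unfolding idm_def pmat_def by (intro ext) auto

lemma pmat_cong: "(\<forall>k\<in>{1..n}. f k = g k) \<Longrightarrow> pmat n f = pmat n g"
  unfolding pmat_def by (intro ext) auto

lemma pmat_GL:
  assumes "p permutes {1..n}"
  shows "pmat n p \<in> GL n"
proof -
  let ?q = "Hilbert_Choice.inv p"
  have p: "\<forall>k\<in>{1..n}. p k \<in> {1..n}" and q: "\<forall>k\<in>{1..n}. ?q k \<in> {1..n}"
    using permutes_in_image[OF assms] permutes_in_image[OF permutes_inv[OF assms]] by auto
  have "mmult n (pmat n p) (pmat n ?q) = pmat n (p \<circ> ?q)"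
    using q by (rule pmat_mmult)
  also have "\<dots> = idm n"
    using assms by (simp add: permutes_inv_o(1) idm_eq_pmat_id)
  finally show ?thesis
    using GL_if_mmult_eq_idm(1)[OF pmat_mats[OF p] pmat_mats[OF q]] by simp
qed

lemma mprod_map_pmat:
  assumes "\<forall>f\<in>set fs. \<forall>k\<in>{1..n}. f k \<in> {1..n}"
  shows "mprod n (map (pmat n) fs) = pmat n (foldr (\<circ>) fs id)"
  using assms
proof (induction fs)
  case Nil
  then show ?case by (simp add: mprod_def idm_eq_pmat_id id_def)
next
  case (Cons f fs)
  have "mprod n (map (pmat n) (f # fs)) = mmult n (pmat n f) (mprod n (map (pmat n) fs))"
    by (simp add: mprod_def)
  also have "mprod n (map (pmat n) fs) = pmat n (foldr (\<circ>) fs id)"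
    by (rule Cons.IH) (use Cons.prems in simp)
  also have "mmult n (pmat n f) (pmat n (foldr (\<circ>) fs id)) = pmat n (f \<circ> foldr (\<circ>) fs id)"
    by (rule pmat_mmult) (use Cons.prems in \<open>induction fs\<close>; auto)
  also have "f \<circ> foldr (\<circ>) fs id = foldr (\<circ>) (f # fs) id"
    by (simp only: foldr.simps comp_apply)
  finally show ?case .
qed

lemma foldr_comp_append: "foldr (\<circ>) (xs @ ys) id = foldr (\<circ>) xs id \<circ> foldr (\<circ>) ys id"
  by (induction xs) auto

text \<open>The products \<open>s\<^sub>1\<^sub>2 s\<^sub>2\<^sub>3 \<cdots> s\<^sub>J\<^sub>-\<^sub>1\<^sub>,\<^sub>J\<close> and \<open>s\<^sub>n\<^sub>,\<^sub>n\<^sub>-\<^sub>1 \<cdots> s\<^sub>i\<^sub>+\<^sub>1\<^sub>,\<^sub>i\<close> are cycles.\<close>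

definition cycle_to_first :: "nat \<Rightarrow> nat \<Rightarrow> nat" where
  "cycle_to_first J k = (if k = J then 1 else if 1 \<le> k \<and> k < J then k + 1 else k)"

definition cycle_to_last :: "nat \<Rightarrow> nat \<Rightarrow> nat \<Rightarrow> nat" where
  "cycle_to_last i M k = (if k = i then M else if i < k \<and> k \<le> M then k - 1 else k)"

lemma foldr_transpose_up:
  "1 \<le> J \<Longrightarrow> foldr (\<circ>) (map (\<lambda>m. Transposition.transpose m (m + 1)) [1..<J]) id = cycle_to_first J"
proof (induction J rule: nat_induct_at_least)
  case base
  then show ?case by (intro ext) (simp add: cycle_to_first_def)
next
  case (Suc J)
  have "[1..<Suc J] = [1..<J] @ [J]" using Suc.hyps by simp
  then have "foldr (\<circ>) (map (\<lambda>m. Transposition.transpose m (m + 1)) [1..<Suc J]) id =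
     cycle_to_first J \<circ> Transposition.transpose J (J + 1)"
    unfolding \<open>[1..<Suc J] = [1..<J] @ [J]\<close> map_append foldr_comp_append Suc.IH by simp
  also have "\<dots> = cycle_to_first (Suc J)"
  proof
    fix k
    show "(cycle_to_first J \<circ> Transposition.transpose J (J + 1)) k = cycle_to_first (Suc J) k"
      using Suc.hyps by (cases "k = J"; cases "k = Suc J")
        (auto simp: cycle_to_first_def Transposition.transpose_def)
  qed
  finally show ?case .
qed

lemma foldr_transpose_down:
  "i \<le> M \<Longrightarrow> foldr (\<circ>) (map (\<lambda>m. Transposition.transpose (m + 1) m) (rev [i..<M])) id = cycle_to_last i M"
proof (induction M rule: nat_induct_at_least)
  case base
  then show ?case by (intro ext) (simp add: cycle_to_last_def)
next
  case (Suc M)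
  have "rev [i..<Suc M] = M # rev [i..<M]" using Suc.hyps by simp
  then have "foldr (\<circ>) (map (\<lambda>m. Transposition.transpose (m + 1) m) (rev [i..<Suc M])) id =
     Transposition.transpose (M + 1) M \<circ> cycle_to_last i M"
    unfolding \<open>rev [i..<Suc M] = M # rev [i..<M]\<close> list.map(2) foldr.simps(2) comp_apply Suc.IH
    by simp
  also have "\<dots> = cycle_to_last i (Suc M)"
  proof
    fix k
    show "(Transposition.transpose (M + 1) M \<circ> cycle_to_last i M) k = cycle_to_last i (Suc M) k"
      using Suc.hyps by (cases "k = i"; cases "k = Suc M"; cases "i < k \<and> k \<le> M")
        (auto simp: cycle_to_last_def Transposition.transpose_def)
  qed
  finally show ?case .
qed

lemma mprod_word_eq_pmat:
  assumes "1 \<le> J" "J \<le> n" "i \<in> {1..n}"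
  shows "mprod n ([pmat n (w0 n)] @ map (\<lambda>m. pmat n (Transposition.transpose m (m + 1))) [1..<J]
                  @ map (\<lambda>m. pmat n (Transposition.transpose (m + 1) m)) (rev [i..<n]))
         = pmat n (w0 n \<circ> cycle_to_first J \<circ> cycle_to_last i n)"
proof -
  define fs where "fs = [w0 n] @ map (\<lambda>m. Transposition.transpose m (m + 1)) [1..<J]
                  @ map (\<lambda>m. Transposition.transpose (m + 1) m) (rev [i..<n])"
  have "[pmat n (w0 n)] @ map (\<lambda>m. pmat n (Transposition.transpose m (m + 1))) [1..<J]
          @ map (\<lambda>m. pmat n (Transposition.transpose (m + 1) m)) (rev [i..<n]) = map (pmat n) fs"
    unfolding fs_def by simp
  moreover have "\<forall>f\<in>set fs. \<forall>k\<in>{1..n}. f k \<in> {1..n}"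
    using assms unfolding fs_def by (auto simp: w0_def Transposition.transpose_def)
  moreover have "foldr (\<circ>) fs id = w0 n \<circ> cycle_to_first J \<circ> cycle_to_last i n"
    using assms unfolding fs_def foldr_comp_append foldr_transpose_up[OF assms(1)]
      foldr_transpose_down[of i n, OF conjunct2[OF assms(3)[unfolded atLeastAtMost_iff]]]
    by (simp add: comp_assoc)
  ultimately show ?thesis
    using mprod_map_pmat[of fs n] by (simp add: comp_assoc)
qed

definition v_perm :: "nat \<Rightarrow> nat \<Rightarrow> nat \<Rightarrow> nat \<Rightarrow> nat" where
  "v_perm n i j k = (if k = j then 1 else if k = i then n
     else if k < j \<and> k < i then k + 1 else if i < k \<and> j < k then k - 1 else k)"

definition w_perm :: "nat \<Rightarrow> nat \<Rightarrow> nat \<Rightarrow> nat \<Rightarrow> nat" where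
  "w_perm n i j k = (if k \<in> {1..n} then n + 1 - v_perm n i j k else k)"

lemma v_perm_mono:
  "i \<noteq> j \<Longrightarrow> k < c \<Longrightarrow> k \<notin> {i, j} \<Longrightarrow> c \<notin> {i, j} \<Longrightarrow> v_perm n i j k < v_perm n i j c"
  unfolding v_perm_def by (cases "k < j"; cases "k < i"; cases "c < j"; cases "c < i") auto

locale Hij_setting =
  fixes n i j :: nat
  assumes n2: "2 \<le> n" and i: "i \<in> {1..n}" and j: "j \<in> {1..n}" and ij: "i \<noteq> j"
begin

abbreviation "v \<equiv> v_perm n i j"
abbreviation "w \<equiv> w_perm n i j"
abbreviation "W \<equiv> pmat n w"

lemma v_i: "v i = n" and v_j: "v j = 1"
  using ij by (auto simp: v_perm_def)

lemma v_range_other: "k \<in> {1..n} \<Longrightarrow> k \<notin> {i, j} \<Longrightarrow> 2 \<le> v k \<and> v k < n"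
  using i j ij unfolding v_perm_def by auto

lemma v_range: "k \<in> {1..n} \<Longrightarrow> v k \<in> {1..n}"
  using n2 v_range_other[of k] v_i v_j by (cases "k = i \<or> k = j") auto

lemma v_eq_n_iff: "k \<in> {1..n} \<Longrightarrow> v k = n \<longleftrightarrow> k = i"
  using v_i v_j v_range_other[of k] n2 by (cases "k = i"; cases "k = j") auto

lemma v_eq_1_iff: "k \<in> {1..n} \<Longrightarrow> v k = 1 \<longleftrightarrow> k = j"
  using v_i v_j v_range_other[of k] n2 by (cases "k = i"; cases "k = j") auto

lemma v_inj:
  assumes "k \<in> {1..n}" "c \<in> {1..n}" "v k = v c"
  shows "k = c"
proof (cases "k \<in> {i, j} \<or> c \<in> {i, j}")
  case True
  then show ?thesis
    using assms v_eq_n_iff[OF assms(1)] v_eq_n_iff[OF assms(2)] v_eq_1_iff[OF assms(1)]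
      v_eq_1_iff[OF assms(2)] by auto
next
  case False
  then show ?thesis
    using v_perm_mono[OF ij, of k c] v_perm_mono[OF ij, of c k] assms(3) by (metis less_irrefl nat_neq_iff)
qed

lemma w_permutes: "w permutes {1..n}"
proof (rule bij_imp_permutes)
  have "k = c" if "k \<in> {1..n}" "c \<in> {1..n}" "w k = w c" for k c
  proof -
    have "n + 1 - v k = n + 1 - v c" using that by (simp add: w_perm_def)
    then have "v k = v c" using v_range[OF that(1)] v_range[OF that(2)] by arith
    then show "k = c" using v_inj that by blast
  qed
  then have "inj_on w {1..n}"
    by (intro inj_onI)
  moreover have "w k \<in> {1..n}" if "k \<in> {1..n}" for k
    using v_range[OF that] that by (auto simp: w_perm_def)
  then have "w ` {1..n} \<subseteq> {1..n}"
    by blast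
  ultimately show "bij_betw w {1..n} {1..n}"
    by (simp add: bij_betw_def card_subset_eq card_image)
qed (auto simp: w_perm_def)

lemma w_range: "k \<in> {1..n} \<Longrightarrow> w k \<in> {1..n}"
  using permutes_in_image[OF w_permutes] by blast

lemma w_inj: "w k = w c \<Longrightarrow> k = c"
  using w_permutes by (simp add: permutes_inj inj_eq)

lemma w_i: "w i = 1" and w_j: "w j = n"
  using i j v_i v_j by (auto simp: w_perm_def)

lemma w_inversion:
  assumes "k \<in> {1..n}" "c \<in> {1..n}" "k \<noteq> i" "k < c" "w k < w c"
  shows "c = j \<and> k < j"
proof -
  have lt: "v c < v k"
    using assms v_range[of k] v_range[of c] by (auto simp: w_perm_def)
  have "c = j"
  proof (rule ccontr)
    assume cj: "c \<noteq> j"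
    show False
    proof (cases "c = i \<or> k = j")
      case True
      then show False using lt v_i v_j v_range assms(1,2) by fastforce
    next
      case False
      then show False using v_perm_mono[OF ij, of k c n] lt assms(3,4) cj by auto
    qed
  qed
  then show ?thesis using assms(4) by simp
qed

lemma W_entry: "W q c = (if c \<in> {1..n} \<and> q = w c then 1 else 0)"
  unfolding pmat_def by auto

lemma W_mats: "W \<in> mats n"
  using pmat_mats w_range by blast

lemma W_GL: "W \<in> GL n"
  using pmat_GL[OF w_permutes] .

lemma mmult_W: "mmult n b W q c = (if c \<in> {1..n} then b q (w c) else 0)"
  using mmult_pmat w_range by blast

lemma W_column_i: "W a i = evec 1 a"
  using i w_i unfolding W_entry evec_def by auto

lemma W_last_row: "1 \<le> b \<Longrightarrow> b < j \<Longrightarrow> W n b = 0"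
  using w_j w_inj j unfolding W_entry by (metis less_irrefl)

lemma W_eq_word:
  "(if j < i then
      mprod n ([pmat n (w0 n)]
               @ map (\<lambda>m. pmat n (Transposition.transpose m (m + 1))) [1..<j]
               @ map (\<lambda>m. pmat n (Transposition.transpose (m + 1) m)) (rev [i..<n]))
    else
      mprod n ([pmat n (w0 n)]
               @ map (\<lambda>m. pmat n (Transposition.transpose m (m + 1))) [1..<j - 1]
               @ map (\<lambda>m. pmat n (Transposition.transpose (m + 1) m)) (rev [i..<n]))) = W"
proof -
  define J where "J = (if j < i then j else j - 1)"
  have J: "1 \<le> J" "J \<le> n" using i j ij unfolding J_def by auto
  have "cycle_to_first J (cycle_to_last i n k) = v k" if k: "k \<in> {1..n}" for k
  proof -
    consider "k = i" | "k = j" | "k < i" "k < j" | "i < k" "j < k" | "i < k" "k < j" | "j < k" "k < i"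
      using ij by linarith
    then show ?thesis
      using i j k ij unfolding J_def cycle_to_first_def cycle_to_last_def v_perm_def
      by cases auto
  qed
  then have "pmat n (w0 n \<circ> cycle_to_first J \<circ> cycle_to_last i n) = W"
    using v_range by (intro pmat_cong) (auto simp: w0_def w_perm_def)
  then show ?thesis
    using mprod_word_eq_pmat[OF J i] unfolding J_def by (simp split: if_splits)
qed

end

subsection \<open>Generic elements of the double coset \<open>B W B\<close>\<close>

text \<open>Let \<open>h\<close> have \<open>i\<close>-th column \<open>e\<^sub>1\<close> and last row vanishing before column \<open>j\<close>. To write
  \<open>h c = b W\<close> with \<open>b, c\<close> upper triangular we need, for each \<open>k\<close>, a vector \<open>y\<close> (the \<open>k\<close>-th
  column of \<open>c\<close>) supported in \<open>{1..k}\<close> with \<open>(h y)\<^sub>q = 0\<close> for \<open>q > w k\<close> and \<open>(h y)\<^bsub>w k\<^esub> = 1\<close>.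
  For \<open>k \<noteq> i\<close> we solve the square system with unknowns indexed by \<open>minor_cols k\<close> and equations
  indexed by their images under \<open>w\<close>; \<open>minor_mat h k\<close> pads it with entries of \<open>W\<close> to an
  \<open>n \<times> n\<close> matrix, whose determinant is, up to sign, the corresponding minor of \<open>h\<close>. The
  remaining equations \<open>q = w c > w k\<close> with \<open>c > k\<close> occur only for \<open>c = j\<close>, \<open>q = n\<close>
  (\<open>w_inversion\<close>), where the vanishing of the last row of \<open>h\<close> takes care of them.\<close>

definition minor_cols :: "nat \<Rightarrow> nat \<Rightarrow> nat \<Rightarrow> nat \<Rightarrow> nat set" where
  "minor_cols n i j k = {c \<in> {1..k}. w_perm n i j k \<le> w_perm n i j c}"

definition minor_mat :: "nat \<Rightarrow> nat \<Rightarrow> nat \<Rightarrow> cmat \<Rightarrow> nat \<Rightarrow> cmat" where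
  "minor_mat n i j h k = (\<lambda>q c.
     if c \<in> minor_cols n i j k then (if q \<in> w_perm n i j ` minor_cols n i j k then h q c else 0)
     else pmat n (w_perm n i j) q c)"

definition bruhat_col :: "nat \<Rightarrow> nat \<Rightarrow> nat \<Rightarrow> cmat \<Rightarrow> nat \<Rightarrow> nat \<Rightarrow> complex" where
  "bruhat_col n i j h k = (if k = i then evec i
     else mvec n (minv n (minor_mat n i j h k)) (evec (w_perm n i j k)))"

context Hij_setting
begin

lemma minor_mat_W: "minor_mat n i j W k = W"
proof (intro ext)
  fix q c
  show "minor_mat n i j W k q c = W q c"
    by (cases "c \<in> minor_cols n i j k") (auto simp: minor_mat_def W_entry)
qed

lemma minor_mat_mats:
  assumes h: "h \<in> mats n"
  shows "minor_mat n i j h k \<in> mats n"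
proof (rule matsI)
  fix a b assume ab: "a \<notin> {1..n} \<or> b \<notin> {1..n}"
  show "minor_mat n i j h k a b = 0"
  proof (cases "b \<in> minor_cols n i j k")
    case True
    then show ?thesis using matsD[OF h ab] by (simp add: minor_mat_def)
  next
    case False
    then show ?thesis using matsD[OF W_mats ab] by (simp add: minor_mat_def)
  qed
qed

lemma mvec_minor_mat_outside:
  assumes "c \<in> {1..n}" "c \<notin> minor_cols n i j k"
  shows "mvec n (minor_mat n i j h k) x (w c) = x c"
proof -
  have "mvec n (minor_mat n i j h k) x (w c) = (\<Sum>c'=1..n. if c' = c then x c' else 0)"
    unfolding mvec_def
  proof (intro sum.cong refl)
    fix c' assume c': "c' \<in> {1..n}"
    have "w c \<notin> w ` minor_cols n i j k" using assms(2) w_inj by blast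
    then show "minor_mat n i j h k (w c) c' * x c' = (if c' = c then x c' else 0)"
      using c' assms(2) w_inj[of c c'] by (cases "c' \<in> minor_cols n i j k") (auto simp: minor_mat_def W_entry)
  qed
  then show ?thesis using assms(1) by (simp add: sum_atLeast1_atMost_delta)
qed

lemma mvec_minor_mat_inside:
  assumes "q \<in> w ` minor_cols n i j k" "\<forall>c. c \<notin> minor_cols n i j k \<longrightarrow> x c = 0"
  shows "mvec n (minor_mat n i j h k) x q = mvec n h x q"
  unfolding mvec_def
proof (intro sum.cong refl)
  fix c
  show "minor_mat n i j h k q c * x c = h q c * x c"
    using assms by (cases "c \<in> minor_cols n i j k") (simp_all add: minor_mat_def)
qed

lemma minor_solution:
  assumes h: "h \<in> mats n" and row: "\<forall>b. 1 \<le> b \<and> b < j \<longrightarrow> h n b = 0"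
    and k: "k \<in> {1..n}" "k \<noteq> i" and d: "mdet n (minor_mat n i j h k) \<noteq> 0"
  defines "y \<equiv> mvec n (minv n (minor_mat n i j h k)) (evec (w k))"
  shows "\<forall>c. c \<notin> minor_cols n i j k \<longrightarrow> y c = 0" and "\<forall>q. w k < q \<longrightarrow> mvec n h y q = 0"
    and "mvec n h y (w k) = 1"
proof -
  let ?A = "minor_mat n i j h k"
  have A: "?A \<in> GL n" using d minor_mat_mats[OF h] by (simp add: GL_iff_mdet)
  have Ay: "mvec n ?A y = evec (w k)"
    unfolding y_def mvec_mmult[symmetric] mmult_minv[OF A] using w_range[OF k(1)] by (rule mvec_idm_evec)
  have kC: "k \<in> minor_cols n i j k" using k(1) by (simp add: minor_cols_def)
  show supp: "\<forall>c. c \<notin> minor_cols n i j k \<longrightarrow> y c = 0"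
  proof (intro allI impI)
    fix c assume c: "c \<notin> minor_cols n i j k"
    show "y c = 0"
    proof (cases "c \<in> {1..n}")
      case True
      then have "y c = evec (w k) (w c)" using mvec_minor_mat_outside[OF True c, of h y] Ay by simp
      then show ?thesis using c kC w_inj by (auto simp: evec_def)
    qed (simp add: y_def mvec_mats_outside minv_mats[OF A])
  qed
  have on_C: "mvec n h y q = evec (w k) q" if "q \<in> w ` minor_cols n i j k" for q
    using mvec_minor_mat_inside[OF that supp, of h] Ay by simp
  show "mvec n h y (w k) = 1" using on_C[of "w k"] kC by (simp add: evec_def)
  show "\<forall>q. w k < q \<longrightarrow> mvec n h y q = 0"
  proof (intro allI impI)
    fix q assume q: "w k < q"
    show "mvec n h y q = 0"
    proof (cases "q \<in> {1..n}")
      case True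
      define c where "c = Hilbert_Choice.inv w q"
      have c: "c \<in> {1..n}" "w c = q"
        unfolding c_def using True permutes_inverses(1)[OF w_permutes]
          permutes_in_image[OF permutes_inv[OF w_permutes]] by auto
      show ?thesis
      proof (cases "c \<in> minor_cols n i j k")
        case True
        then show ?thesis using on_C[of q] c q by (auto simp: evec_def)
      next
        case False
        then have "k < c" using c q by (auto simp: minor_cols_def)
        then have "c = j" "k < j" using w_inversion[OF k(1) c(1) k(2)] c q by auto
        then have "q = n" "\<forall>c'. h n c' * y c' = 0"
          using c w_j row supp by (auto simp: minor_cols_def) (metis le_less_trans)
        then show ?thesis unfolding mvec_def by (auto intro: sum.neutral)
      qed
    qed (simp add: mvec_mats_outside h)
  qed
qed

lemma bruhat_col_solves:
  assumes h: "h \<in> mats n" and col: "\<forall>a. h a i = evec 1 a"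
    and row: "\<forall>b. 1 \<le> b \<and> b < j \<longrightarrow> h n b = 0"
    and k: "k \<in> {1..n}" and d: "k \<noteq> i \<longrightarrow> mdet n (minor_mat n i j h k) \<noteq> 0"
  shows "supported_upto (bruhat_col n i j h k) k \<and>
    (\<forall>q. w k < q \<longrightarrow> mvec n h (bruhat_col n i j h k) q = 0) \<and>
    mvec n h (bruhat_col n i j h k) (w k) = 1"
proof (cases "k = i")
  case True
  have "mvec n h (evec i) = evec 1" using mvec_evec[OF i] col by auto
  then show ?thesis using True w_i i by (auto simp: bruhat_col_def evec_def supported_upto_def)
next
  case False
  have "bruhat_col n i j h k c = 0" if "c \<notin> {1..k}" for c
    using minor_solution(1)[OF h row k False] d False that by (auto simp: bruhat_col_def minor_cols_def)
  then have "supported_upto (bruhat_col n i j h k) k"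
    unfolding supported_upto_def by blast
  then show ?thesis
    using minor_solution(2,3)[OF h row k False] d False by (simp add: bruhat_col_def)
qed

lemma eq_Bor_mmult_W:
  assumes X: "X \<in> mats n"
    and below: "\<And>k q. k \<in> {1..n} \<Longrightarrow> w k < q \<Longrightarrow> X q k = 0"
    and pivot: "\<And>k. k \<in> {1..n} \<Longrightarrow> X (w k) k = 1"
  shows "\<exists>b\<in>Bor n. X = mmult n b W"
proof -
  let ?u = "Hilbert_Choice.inv w"
  have u: "?u r \<in> {1..n}" "w (?u r) = r" if "r \<in> {1..n}" for r
    using that permutes_inverses(1)[OF w_permutes] permutes_in_image[OF permutes_inv[OF w_permutes]]
    by auto
  define b where "b = (\<lambda>q r. if r \<in> {1..n} then X q (?u r) else 0)"
  have "X q c = mmult n b W q c" for q c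
  proof (cases "c \<in> {1..n}")
    case True
    then show ?thesis
      using permutes_inverses(2)[OF w_permutes] w_range[OF True] by (simp add: mmult_W b_def)
  next
    case False
    then show ?thesis using matsD[OF X] by (auto simp: mmult_W)
  qed
  then have "X = mmult n b W" by (intro ext)
  moreover have "b \<in> mats n"
  proof (rule matsI)
    fix q r assume "q \<notin> {1..n} \<or> r \<notin> {1..n}"
    then show "b q r = 0" using matsD[OF X] u(1)[of r] by (auto simp: b_def)
  qed
  moreover have "upper_tri b" unfolding upper_tri_def
  proof (intro allI impI)
    fix q r :: nat assume "r < q"
    then show "b q r = 0" using below[of "?u r" q] u[of r] by (simp add: b_def)
  qed
  moreover have "b k k = 1" if "k \<in> {1..n}" for k
    using pivot[OF u(1)[OF that]] u(2)[OF that] that by (simp add: b_def)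
  then have "mdet n b = 1"
    using mdet_upper_tri[OF \<open>upper_tri b\<close>] by simp
  ultimately show ?thesis using BorI by (auto simp: GL_iff_mdet)
qed

lemma Bruhat_decomposition_generic:
  assumes hG: "h \<in> GL n" and col: "\<forall>a. h a i = evec 1 a"
    and row: "\<forall>b. 1 \<le> b \<and> b < j \<longrightarrow> h n b = 0"
    and d: "\<forall>k\<in>{1..n}. k \<noteq> i \<longrightarrow> mdet n (minor_mat n i j h k) \<noteq> 0"
  shows "\<exists>c\<in>Bor n. \<exists>b\<in>Bor n. mmult n h c = mmult n b W"
proof -
  have h: "h \<in> mats n" using GL_mats[OF hG] .
  define c where "c = (\<lambda>q k. if k \<in> {1..n} then bruhat_col n i j h k q else 0)"
  have col_props: "supported_upto (bruhat_col n i j h k) k \<and>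
      (\<forall>q. w k < q \<longrightarrow> mvec n h (bruhat_col n i j h k) q = 0) \<and>
      mvec n h (bruhat_col n i j h k) (w k) = 1" if "k \<in> {1..n}" for k
    using bruhat_col_solves[OF h col row that] d that by simp
  have hc: "mmult n h c q k = mvec n h (bruhat_col n i j h k) q" if "k \<in> {1..n}" for q k
    unfolding mmult_def c_def mvec_def using that by simp
  have c_vanishes: "c q k = 0" if "q \<notin> {1..k}" for q k
  proof (cases "k \<in> {1..n}")
    case True
    then show ?thesis
      using conjunct1[OF col_props[OF True]] that unfolding supported_upto_def c_def by auto
  qed (auto simp: c_def)
  have c_mats: "c \<in> mats n"
  proof (rule matsI)
    fix q k assume qk: "q \<notin> {1..n} \<or> k \<notin> {1..n}"
    show "c q k = 0"
    proof (cases "k \<in> {1..n}")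
      case True
      then show ?thesis using qk c_vanishes[of q k] by auto
    qed (auto simp: c_def)
  qed
  have c_upper: "upper_tri c"
    unfolding upper_tri_def using c_vanishes by simp
  obtain b where b: "b \<in> Bor n" and hcb: "mmult n h c = mmult n b W"
  proof (rule bexE[OF eq_Bor_mmult_W[OF mmult_mats[OF h c_mats]]])
    show "mmult n h c q k = 0" if "k \<in> {1..n}" "w k < q" for k q
      using col_props[OF that(1)] that(2) hc[OF that(1)] by simp
    show "mmult n h c (w k) k = 1" if "k \<in> {1..n}" for k
      using col_props[OF that] hc[OF that] by simp
  qed
  have "mdet n h * mdet n c = mdet n b * mdet n W"
    using arg_cong[OF hcb, of "mdet n"] by (simp add: mdet_mmult)
  then have "mdet n c \<noteq> 0"
    using hG W_GL Bor_GL[OF b] by (auto simp: GL_iff_mdet)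
  then have "c \<in> Bor n" using BorI c_mats c_upper by (simp add: GL_iff_mdet)
  then show ?thesis using b hcb by blast
qed

end

subsection \<open>Closure arguments\<close>

lemma flag_closed_limit:
  assumes C: "flag_closed n C" and g: "g \<in> GL n" and lim: "(G \<longlongrightarrow> g) F" and F: "F \<noteq> bot"
    and ev: "eventually (\<lambda>t. G t \<in> GL n \<and> flagof n (G t) \<in> C) F"
  shows "flagof n g \<in> C"
proof -
  define P where "P = {g \<in> GL n. flagof n g \<in> C}"
  have "closedin (top_of_set (GL n)) P"
    using C unfolding flag_closed_def P_def by blast
  then obtain T where T: "closed T" "P = GL n \<inter> T"
    using closedin_closed by metis
  have in_T: "x \<in> T" if "x \<in> GL n \<and> flagof n x \<in> C" for x
    using that T(2) unfolding P_def by (simp add: set_eq_iff)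
  from ev have "eventually (\<lambda>t. G t \<in> T) F"
    by (rule eventually_mono) (rule in_T)
  then have "g \<in> T"
    by (rule Lim_in_closed_set[OF T(1) _ F lim])
  then have "g \<in> P" using T(2) g by simp
  then show ?thesis unfolding P_def by simp
qed

lemma line_tendsto_at_0: "((\<lambda>t. \<lambda>a b. g a b + t * D a b) \<longlongrightarrow> (g::cmat)) (at (0::complex))"
proof -
  have "continuous_on UNIV (\<lambda>t::complex. \<lambda>a b. g a b + t * D a b)"
    by (intro continuous_on_coordinatewise_then_product continuous_intros)
  then have "isCont (\<lambda>t::complex. \<lambda>a b. g a b + t * D a b) 0"
    using continuous_on_eq_continuous_at open_UNIV by blast
  then show ?thesis by (simp add: isCont_def)
qed

definition transvection :: "nat \<Rightarrow> complex \<Rightarrow> (nat \<Rightarrow> complex) \<Rightarrow> nat \<Rightarrow> cmat" where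
  "transvection n s z p = (\<lambda>a b. idm n a b + (if b = p then s * z a else 0))"

lemma mvec_transvection:
  assumes "p \<in> {1..n}"
  shows "mvec n (transvection n s z p) x a = (if a \<in> {1..n} then x a else 0) + s * x p * z a"
proof -
  have "mvec n (transvection n s z p) x a =
      (\<Sum>b=1..n. idm n a b * x b) + (\<Sum>b=1..n. if b = p then s * z a * x b else 0)"
    unfolding mvec_def transvection_def sum.distrib[symmetric]
    by (intro sum.cong) (auto simp: distrib_right)
  moreover have "(\<Sum>b=1..n. idm n a b * x b) = (if a \<in> {1..n} then x a else 0)"
    using fun_cong[OF mvec_idm[of n x], of a] by (simp add: mvec_def)
  ultimately show ?thesis
    using assms by (simp add: sum_atLeast1_atMost_delta mult_ac)
qed

lemma mmult_transvection:
  assumes "g \<in> mats n"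
  shows "mmult n g (transvection n s z p) = (\<lambda>a b. g a b + s * (if b = p then mvec n g z a else 0))"
proof (intro ext)
  fix a b
  have "mmult n g (transvection n s z p) a b =
      mmult n g (idm n) a b + (\<Sum>k=1..n. g a k * (if b = p then s * z k else 0))"
    unfolding mmult_def transvection_def sum.distrib[symmetric]
    by (intro sum.cong) (simp_all add: distrib_left)
  also have "(\<Sum>k=1..n. g a k * (if b = p then s * z k else 0)) = s * (if b = p then mvec n g z a else 0)"
    by (cases "b = p") (simp_all add: mvec_def sum_distrib_left mult.left_commute)
  finally show "mmult n g (transvection n s z p) a b = g a b + s * (if b = p then mvec n g z a else 0)"
    using mmult_idm_right[OF assms] by simp
qed

lemma transvection_GL:
  assumes p: "p \<in> {1..n}" and z: "supported_upto z n" "z p = 0"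
  shows "transvection n s z p \<in> GL n"
proof -
  have z_out: "z a = 0" if "a \<notin> {1..n}" for a
    using z(1) that by (auto simp: supported_upto_def)
  have T_mats: "transvection n t z p \<in> mats n" for t
  proof (rule matsI)
    fix a b assume ab: "a \<notin> {1..n} \<or> b \<notin> {1..n}"
    then have "b = p \<Longrightarrow> z a = 0" using p z_out by blast
    then show "transvection n t z p a b = 0"
      using matsD[OF idm_mats ab] by (simp add: transvection_def)
  qed
  have "mmult n (transvection n s z p) (transvection n (- s) z p) a b = idm n a b" for a b
  proof -
    let ?y = "\<lambda>k. transvection n (- s) z p k b"
    have "mmult n (transvection n s z p) (transvection n (- s) z p) a b =
        mvec n (transvection n s z p) ?y a"
      by (simp add: mmult_def mvec_def)
    also have "\<dots> = (if a \<in> {1..n} then ?y a else 0) + s * ?y p * z a"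
      by (rule mvec_transvection[OF p])
    also have "\<dots> = idm n a b"
    proof -
      have yp: "?y p = (if b = p then 1 else 0)"
        using p z(2) by (auto simp: transvection_def idm_def)
      show ?thesis
      proof (cases "b = p")
        case True
        then have "?y a = idm n a p - s * z a" by (simp add: transvection_def)
        then show ?thesis
          using True yp z_out[of a] by (cases "a \<in> {1..n}") (auto simp: idm_def)
      next
        case False
        then show ?thesis using yp by (simp add: transvection_def idm_def)
      qed
    qed
    finally show ?thesis .
  qed
  then have "mmult n (transvection n s z p) (transvection n (- s) z p) = idm n"
    by (intro ext)
  then show ?thesis using GL_if_mmult_eq_idm(1)[OF T_mats T_mats] by simp
qed

context Hij_setting
begin

lemma XH_witness_transvection:
  assumes g: "XH_witness n i j g u" and p: "p \<in> {1..i}"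
    and z: "supported_upto z i" "z p = 0" and last: "j \<le> p \<or> mvec n g z n = 0"
  shows "XH_witness n i j (mmult n g (transvection n s z p)) (\<lambda>a. u a - s * u p * z a)"
proof -
  have gG: "g \<in> GL n" and row: "\<forall>b. 1 \<le> b \<and> b < j \<longrightarrow> g n b = 0"
    and u: "supported_upto u i" "mvec n g u = evec 1"
    using g unfolding XH_witness_def by blast+
  have pn: "p \<in> {1..n}" and zn: "supported_upto z n"
    using p z(1) i by (auto simp: supported_upto_def)
  let ?u' = "\<lambda>a. u a - s * u p * z a"
  have "?u' a = 0" if "a \<notin> {1..i}" for a
  proof -
    have "u a = 0" "z a = 0" using u(1) z(1) that unfolding supported_upto_def by blast+
    then show ?thesis by simp
  qed
  then have "supported_upto ?u' i"
    unfolding supported_upto_def by blast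
  moreover have "mvec n (transvection n s z p) ?u' a = u a" for a
  proof (cases "a \<in> {1..n}")
    case False
    then have "u a = 0" "z a = 0" using u(1) z(1) i by (auto simp: supported_upto_def)
    then show ?thesis using False by (simp add: mvec_transvection[OF pn])
  qed (simp add: mvec_transvection[OF pn] z(2))
  then have "mvec n (transvection n s z p) ?u' = u" by (rule ext)
  then have "mvec n (mmult n g (transvection n s z p)) ?u' = evec 1"
    by (simp add: mvec_mmult u(2))
  moreover have "mmult n g (transvection n s z p) n b = 0" if "1 \<le> b" "b < j" for b
    using row that last by (auto simp: mmult_transvection[OF GL_mats[OF gG]])
  ultimately show ?thesis
    unfolding XH_witness_def using GL_mmult[OF gG transvection_GL[OF pn zn z(2)]] by blast
qed

abbreviation "cell \<equiv> {flagof n (mmult n b W) | b. b \<in> Bor n}"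

text \<open>Along the line from \<open>g\<close> to \<open>W\<close> all minors of \<open>minor_mat\<close> are polynomials in the
  parameter that do not vanish at \<open>W\<close>, hence they are all nonzero arbitrarily close to \<open>g\<close>.\<close>

lemma closure_cell_normalized:
  assumes gG: "g \<in> GL n" and col: "\<forall>a. g a i = evec 1 a"
    and row: "\<forall>b. 1 \<le> b \<and> b < j \<longrightarrow> g n b = 0"
    and C: "flag_closed n C" "cell \<subseteq> C"
  shows "flagof n g \<in> C"
proof -
  define G where "G = (\<lambda>t::complex. \<lambda>a b. g a b + t * (W a b - g a b))"
  define K where "K = {1..n} - {i}"
  define f where "f = (\<lambda>t. mdet n (G t) * (\<Prod>k\<in>K. mdet n (minor_mat n i j (G t) k)))"
  have G_holo: "(\<lambda>t. G t q c) holomorphic_on UNIV" for q c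
    unfolding G_def by (intro holomorphic_intros)
  then have "(\<lambda>t. minor_mat n i j (G t) k q c) holomorphic_on UNIV" for k q c
    by (cases "c \<in> minor_cols n i j k"; cases "q \<in> w ` minor_cols n i j k")
      (simp_all add: minor_mat_def holomorphic_on_const)
  then have "f holomorphic_on UNIV"
    unfolding f_def by (intro holomorphic_intros holomorphic_on_mdet G_holo)
  moreover have "G 1 = W" unfolding G_def by (intro ext) simp
  then have "f 1 \<noteq> 0"
    using W_GL by (simp add: f_def minor_mat_W GL_iff_mdet)
  ultimately have "eventually (\<lambda>t. f t \<noteq> 0) (at 0)"
    using non_zero_neighbour_alt[of f UNIV 0 1] by (auto elim: eventually_mono)
  then have ev: "eventually (\<lambda>t. G t \<in> GL n \<and> flagof n (G t) \<in> C) (at 0)"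
  proof eventually_elim
    case (elim t)
    have dets: "mdet n (G t) \<noteq> 0" "\<forall>k\<in>{1..n}. k \<noteq> i \<longrightarrow> mdet n (minor_mat n i j (G t) k) \<noteq> 0"
      using elim by (auto simp: f_def K_def)
    have Gm: "G t \<in> mats n"
      using GL_mats[OF gG] W_mats unfolding G_def by (auto simp: mats_def)
    then have GG: "G t \<in> GL n" using dets(1) by (simp add: GL_iff_mdet)
    moreover have "\<forall>a. G t a i = evec 1 a" "\<forall>b. 1 \<le> b \<and> b < j \<longrightarrow> G t n b = 0"
      using col row W_column_i W_last_row by (simp_all add: G_def)
    then obtain c b where "c \<in> Bor n" "b \<in> Bor n" "mmult n (G t) c = mmult n b W"
      using Bruhat_decomposition_generic[OF GG _ _ dets(2)] by blast
    then have "flagof n (G t) = flagof n (mmult n b W)"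
      using flagof_mmult_Bor[OF _ Gm] by metis
    then have "flagof n (G t) \<in> C"
      using C(2) \<open>b \<in> Bor n\<close> by blast
    ultimately show ?case by blast
  qed
  have lim: "(G \<longlongrightarrow> g) (at 0)"
    unfolding G_def by (rule line_tendsto_at_0)
  show ?thesis by (rule flag_closed_limit[OF C(1) gG lim at_neq_bot ev])
qed

lemma closure_cell_coeff_i:
  assumes g: "XH_witness n i j g u" and ui: "u i \<noteq> 0" and C: "flag_closed n C" "cell \<subseteq> C"
  shows "flagof n g \<in> C"
proof -
  have gG: "g \<in> GL n" and row: "\<forall>b. 1 \<le> b \<and> b < j \<longrightarrow> g n b = 0"
    and u: "supported_upto u i" "mvec n g u = evec 1"
    using g unfolding XH_witness_def by blast+
  define c where "c = replace_column i u (idm n)"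
  have c_mats: "c \<in> mats n"
    using u(1) i by (intro matsI) (auto simp: c_def replace_column_def idm_def supported_upto_def)
  have c_upper: "upper_tri c"
    using u(1) by (auto simp: upper_tri_def c_def replace_column_def idm_def supported_upto_def)
  have "mdet n c = (\<Prod>k=1..n. if k = i then u i else 1)"
    unfolding mdet_upper_tri[OF c_upper] by (intro prod.cong) (auto simp: c_def replace_column_def idm_def)
  also have "\<dots> = u i" using i by simp
  finally have "mdet n c = u i" .
  then have cB: "c \<in> Bor n" using c_mats c_upper ui BorI by (simp add: GL_iff_mdet)
  have "mmult n g c = replace_column i (mvec n g u) (mmult n g (idm n))"
  proof (intro ext)
    fix a b
    show "mmult n g c a b = replace_column i (mvec n g u) (mmult n g (idm n)) a b"
      by (cases "b = i") (simp_all add: c_def mmult_def replace_column_def mvec_def)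
  qed
  then have gc: "mmult n g c = replace_column i (evec 1) g"
    by (simp add: u(2) mmult_idm_right[OF GL_mats[OF gG]])
  moreover have "replace_column i (evec 1) g \<in> GL n"
    using GL_mmult[OF gG Bor_GL[OF cB]] gc by simp
  then have "flagof n (replace_column i (evec 1) g) \<in> C"
  proof (rule closure_cell_normalized[OF _ _ _ C])
    show "\<forall>a. replace_column i (evec 1) g a i = evec 1 a"
      by (simp add: replace_column_def)
    show "\<forall>b. 1 \<le> b \<and> b < j \<longrightarrow> replace_column i (evec 1) g n b = 0"
      using row n2 by (simp add: replace_column_def evec_def)
  qed
  ultimately
  show ?thesis
    using flagof_mmult_Bor[OF cB GL_mats[OF gG]] by simp
qed

text \<open>Perturbing \<open>g\<close> by a transvection moves weight of \<open>u = g\<^sup>-\<^sup>1 e\<^sub>1\<close> from position \<open>p\<close> to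
  the support of \<open>z\<close>, staying inside \<open>X\<^sub>H\<close>.\<close>

lemma closure_by_transvection:
  assumes g: "XH_witness n i j g u" and p: "p \<in> {1..i}" "u p \<noteq> 0"
    and z: "supported_upto z i" "z p = 0" and last: "j \<le> p \<or> mvec n g z n = 0"
    and C: "flag_closed n C"
    and perturbed: "\<And>s g'. s \<noteq> 0 \<Longrightarrow> XH_witness n i j g' (\<lambda>a. u a - s * u p * z a) \<Longrightarrow> flagof n g' \<in> C"
  shows "flagof n g \<in> C"
proof -
  have gG: "g \<in> GL n" using g by (simp add: XH_witness_def)
  have pn: "p \<in> {1..n}" using p i by auto
  let ?G = "\<lambda>s. mmult n g (transvection n s z p)"
  have "eventually (\<lambda>s. s \<noteq> 0) (at (0::complex))"
    by (simp add: eventually_at_filter)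
  then have ev: "eventually (\<lambda>s. ?G s \<in> GL n \<and> flagof n (?G s) \<in> C) (at 0)"
  proof (rule eventually_mono)
    fix s :: complex assume "s \<noteq> 0"
    have "XH_witness n i j (?G s) (\<lambda>a. u a - s * u p * z a)"
      by (rule XH_witness_transvection[OF g p(1) z last])
    then show "?G s \<in> GL n \<and> flagof n (?G s) \<in> C"
      using perturbed[OF \<open>s \<noteq> 0\<close>] by (simp add: XH_witness_def)
  qed
  have lim: "(?G \<longlongrightarrow> g) (at 0)"
    unfolding mmult_transvection[OF GL_mats[OF gG]] by (rule line_tendsto_at_0)
  show ?thesis by (rule flag_closed_limit[OF C gG lim at_neq_bot ev])
qed

lemma closure_cell_pivot:
  assumes g: "XH_witness n i j g u" and p: "p \<in> {1..i}" "u p \<noteq> 0" and last: "j \<le> p \<or> g n i = 0"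
    and C: "flag_closed n C" "cell \<subseteq> C"
  shows "flagof n g \<in> C"
proof (cases "u i = 0")
  case True
  then have "p \<noteq> i" using p(2) by auto
  show ?thesis
  proof (rule closure_by_transvection[OF g p])
    show "supported_upto (evec i) i" "evec i p = 0"
      using i \<open>p \<noteq> i\<close> by (auto simp: supported_upto_def evec_def)
    show "j \<le> p \<or> mvec n g (evec i) n = 0"
      using last mvec_evec[OF i, of g] by simp
    show "flag_closed n C" by (rule C(1))
    show "flagof n g' \<in> C" if "s \<noteq> 0" "XH_witness n i j g' (\<lambda>a. u a - s * u p * evec i a)" for s g'
      using closure_cell_coeff_i[OF that(2) _ C] True that(1) p(2) by (simp add: evec_def)
  qed
qed (use closure_cell_coeff_i[OF g _ C] in blast)

lemma closure_cell_X:
  assumes g: "XH_witness n i j g u" and C: "flag_closed n C" "cell \<subseteq> C"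
  shows "flagof n g \<in> C"
proof -
  have row: "\<forall>b. 1 \<le> b \<and> b < j \<longrightarrow> g n b = 0" and u: "supported_upto u i" "mvec n g u = evec 1"
    using g unfolding XH_witness_def by blast+
  define S where "S = {k \<in> {1..i}. u k \<noteq> 0}"
  obtain a where "a \<in> {1..n}" "u a \<noteq> 0" using mvec_nonzero_support[OF u(2)] by blast
  then have "S \<noteq> {}" "finite S" using u(1) by (auto simp: S_def supported_upto_def)
  define p where "p = Max S"
  have p: "p \<in> {1..i}" "u p \<noteq> 0" and p_max: "\<And>k. k \<in> {1..i} \<Longrightarrow> u k \<noteq> 0 \<Longrightarrow> k \<le> p"
    using Max_in[OF \<open>finite S\<close> \<open>S \<noteq> {}\<close>] Max_ge[OF \<open>finite S\<close>] by (auto simp: p_def S_def)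
  show ?thesis
  proof (cases "j \<le> p \<or> g n i = 0")
    case True
    then show ?thesis using closure_cell_pivot[OF g p True C] by blast
  next
    case False
    then have pj: "p < j" and gni: "g n i \<noteq> 0" by auto
    have ji: "j < i" using row gni i ij by (metis atLeastAtMost_iff linorder_neqE_nat)
    have uj: "u j = 0" using p_max[of j] pj ji j by fastforce
    txt \<open>First move the weight to position \<open>j\<close>, keeping \<open>x\<^sub>n\<close> of the perturbed vector zero.\<close>
    define z where "z = (\<lambda>a. evec j a - g n j / g n i * evec i a)"
    have z: "supported_upto z i" "z p = 0"
      using j ji pj i by (auto simp: z_def evec_def supported_upto_def)
    have "mvec n g z n = mvec n g (evec j) n - g n j / g n i * mvec n g (evec i) n"
      unfolding z_def mvec_def by (simp add: right_diff_distrib sum_subtractf sum_distrib_left mult_ac)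
    then have gz: "mvec n g z n = 0"
      using gni by (simp add: mvec_evec[OF i] mvec_evec[OF j])
    show ?thesis
    proof (rule closure_by_transvection[OF g p z _ C(1)])
      show "j \<le> p \<or> mvec n g z n = 0" using gz by simp
      show "flagof n g' \<in> C" if "s \<noteq> 0" "XH_witness n i j g' (\<lambda>a. u a - s * u p * z a)" for s g'
        using closure_cell_pivot[OF that(2) _ _ _ C, of j] that(1) p(2) uj j ji
        by (auto simp: z_def evec_def)
    qed
  qed
qed

end

context Hij_setting
begin

lemma XH_witness_Bor_W:
  assumes bB: "b \<in> Bor n"
  shows "XH_witness n i j (mmult n b W) (\<lambda>a. evec i a / b 1 1)"
proof -
  have bG: "b \<in> GL n" and bu: "upper_tri b" using bB by (auto simp: Bor_GL Bor_upper_tri)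
  have "mmult n b W n c = 0" if c: "1 \<le> c" "c < j" for c
  proof -
    have cn: "c \<in> {1..n}" using c j by auto
    then have "w c < n" using w_inj[of c j] w_j c w_range[OF cn] by fastforce
    then show ?thesis using bu cn unfolding mmult_W upper_tri_def by auto
  qed
  moreover have "mvec n (mmult n b W) (\<lambda>a. evec i a / b 1 1) = evec 1"
  proof
    fix a
    have b11: "b 1 1 \<noteq> 0" using upper_tri_GL_diag_nonzero[OF bG bu, of 1] n2 by auto
    have "mvec n (mmult n b W) (\<lambda>a. evec i a / b 1 1) a = mmult n b W a i / b 1 1"
      using fun_cong[OF mvec_evec[OF i, of "mmult n b W"], of a]
      by (simp add: mvec_def evec_def sum_divide_distrib[symmetric])
    also have "\<dots> = b a 1 / b 1 1" using i by (simp add: mmult_W w_i)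
    also have "\<dots> = evec 1 a"
      using b11 bu matsD[OF GL_mats[OF bG], of 0 1] unfolding upper_tri_def evec_def
      by (cases "a = 0"; cases "a = 1") auto
    finally show "mvec n (mmult n b W) (\<lambda>a. evec i a / b 1 1) a = evec 1 a" .
  qed
  moreover have "supported_upto (\<lambda>a. evec i a / b 1 1) i"
    using i by (auto simp: evec_def supported_upto_def)
  ultimately show ?thesis
    unfolding XH_witness_def using GL_mmult[OF bG W_GL] by blast
qed

lemma XH_eq_Schubert: "XH n (Hsp n i j) = Schubert n W"
proof -
  have n: "1 \<le> n" and i': "i \<le> n" using n2 i by auto
  have "cell \<subseteq> XH n (Hsp n i j)"
    using XH_witness_Bor_W flagof_in_XH_iff[OF _ n i'] XH_witness_def by blast
  moreover have "XH n (Hsp n i j) \<subseteq> C" if "flag_closed n C" "cell \<subseteq> C" for C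
    using closure_cell_X[OF _ that] flagof_in_XH_iff[OF _ n i'] unfolding XH_def by blast
  ultimately show ?thesis
    unfolding Schubert_def flag_closure_def using flag_closed_XH[OF n i'] by blast
qed

end

theorem mainTheorem4:
  fixes n i j :: nat
  assumes "n \<ge> 2" and "i \<in> {1..n}" and "j \<in> {1..n}" and "i \<noteq> j"
  shows "XH n (Hsp n i j) =
    Schubert n
      (if j < i then
         mprod n ([pmat n (w0 n)]
                  @ map (\<lambda>m. pmat n (Transposition.transpose m (m + 1))) [1..<j]
                  @ map (\<lambda>m. pmat n (Transposition.transpose (m + 1) m)) (rev [i..<n]))
       else
         mprod n ([pmat n (w0 n)]
                  @ map (\<lambda>m. pmat n (Transposition.transpose m (m + 1))) [1..<j - 1]
                  @ map (\<lambda>m. pmat n (Transposition.transpose (m + 1) m)) (rev [i..<n])))"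
proof -
  interpret Hij_setting n i j using assms by unfold_locales auto
  show ?thesis unfolding W_eq_word using XH_eq_Schubert .
qed

end
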